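(* Let $X=\{X(t),t\in[a,b]\}$ be a centered separable Gaussian process with $m:=\sup_{t\in[a,b]}\left(\mathbb E|X(t)|^2\right)^{1/2}<\infty$. Assume there is a strictly increasing function $\sigma:(0,\infty)\to(0,\infty)$ with $\sigma(h)\downarrow0$ as $h\downarrow0$ and $\sup_{|t-s|<h}\left(\mathbb E|X(t)-X(s)|^2\right)^{1/2}\le\sigma(h)$ for all $h>0$. Let $r:[1,\infty)\to[0,\infty)$ be nondecreasing with $y\mapsto r(e^y)$, $y\ge0$, convex. Then for any $\theta\in(0,1)$ and any $\lambda>0$, \[ \mathbb E\exp\Big\{\lambda\sup_{t\in[a,b]}|X(t)|\Big\}\le2\exp\Big\{\frac{\lambda^2m^2}{2(1-\theta)^2}\Big\}r^{(-1)}\Big(\frac{\widetilde I_r(\theta m)}{\theta m}\Big),\qquad \widetilde I_r(x)=\int_0^x r\Big(\frac{b-a}{2\sigma^{(-1)}(v)}+1\Big)dv. \]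
   Context: $\sigma^{(-1)}$ is the inverse of $\sigma$; $r^{(-1)}(t)=\sup\{u\ge0:r(u)\le t\}$ is the generalized inverse of $r$. *)

theory Defs
  imports "HOL-Probability.Probability"
begin

definition centered_normal_rv :: "'a measure \<Rightarrow> ('a \<Rightarrow> real) \<Rightarrow> bool" where
  "centered_normal_rv M Y \<longleftrightarrow> Y \<in> borel_measurable M \<and>
     ((AE \<omega> in M. Y \<omega> = 0) \<or> (\<exists>s>0. distributed M lborel Y (normal_density 0 s)))"

definition centered_gaussian_process :: "'a measure \<Rightarrow> real set \<Rightarrow> (real \<Rightarrow> 'a \<Rightarrow> real) \<Rightarrow> bool" where
  "centered_gaussian_process M I X \<longleftrightarrow>
     (\<forall>F c. finite F \<and> F \<subseteq> I \<longrightarrow> centered_normal_rv M (\<lambda>\<omega>. \<Sum>t\<in>F. c t * X t \<omega>))"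

definition separable_process :: "'a measure \<Rightarrow> real set \<Rightarrow> (real \<Rightarrow> 'a \<Rightarrow> real) \<Rightarrow> bool" where
  "separable_process M I X \<longleftrightarrow>
     (\<exists>S N. countable S \<and> S \<subseteq> I \<and> N \<in> sets M \<and> emeasure M N = 0 \<and>
        (\<forall>\<omega>\<in>space M - N. \<forall>t\<in>I. (t, X t \<omega>) \<in> closure ((\<lambda>s. (s, X s \<omega>)) ` S)))"

text \<open>Generalized inverse of sigma (equals the inverse on the range of sigma; +\<infinity> above it).\<close>
definition sigma_ginv :: "(real \<Rightarrow> real) \<Rightarrow> real \<Rightarrow> ereal" where
  "sigma_ginv \<sigma> v = (SUP h \<in> {h. 0 < h \<and> \<sigma> h \<le> v}. ereal h)"

definition r_ginv :: "(real \<Rightarrow> real) \<Rightarrow> ennreal \<Rightarrow> ennreal" where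
  "r_ginv r t = (SUP u \<in> {u. 1 \<le> u \<and> ennreal (r u) \<le> t}. ennreal u)"

definition I_tilde :: "(real \<Rightarrow> real) \<Rightarrow> (real \<Rightarrow> real) \<Rightarrow> real \<Rightarrow> real \<Rightarrow> real \<Rightarrow> ennreal" where
  "I_tilde r \<sigma> a b x = (\<integral>\<^sup>+ v\<in>{0..x}.
      ennreal (r ((if sigma_ginv \<sigma> v = \<infinity> then 0
                   else (b - a) / (2 * real_of_ereal (sigma_ginv \<sigma> v))) + 1)) \<partial>lborel)"

end

theory Submission
  imports Defs
begin

text \<open>Chaining along the geometric scales \<open>\<theta>^k m\<close>. For finite \<open>T \<subseteq> {a..b}\<close> take nets \<open>A k\<close> of
  \<open>{a..b}\<close> of mesh \<open>sigma_ginv \<sigma> (\<theta>^k m)\<close>, with at most \<open>covering_bound \<sigma> a b (\<theta>^k m) + 1\<close>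
  points, and chain every \<open>t \<in> T\<close> through \<open>A K, \<dots>, A 1\<close>; the links of level \<open>k\<close> are centered
  Gaussians of standard deviation at most \<open>\<theta>^k m\<close>. Hoelder's inequality with the weights
  \<open>(1 - \<theta>) \<theta>^k\<close> splits \<open>exp (\<lambda> sup |X|)\<close> into the levels, and each level costs at most
  \<open>2 card (A k)\<close> times a Gaussian factor. The Gaussian factors multiply to
  \<open>exp (\<lambda>\<^sup>2 m\<^sup>2 / (2 (1 - \<theta>)\<^sup>2))\<close>, while Jensen's inequality for the convex function
  \<open>y \<mapsto> r (exp y)\<close> bounds the weighted geometric mean of the \<open>card (A k)\<close> by
  \<open>r_ginv r (I_tilde r \<sigma> a b (\<theta> m) / (\<theta> m))\<close>, since the weighted sum of the \<open>r (card (A k))\<close> is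
  a lower Riemann sum of that integral. Letting \<open>K \<rightarrow> \<infinity>\<close> removes the dependence on \<open>card T\<close>;
  monotone convergence and separability pass from finite \<open>T\<close> to \<open>{a..b}\<close>.\<close>

lemma normal_density_mult_exp:
  assumes "s > 0"
  shows "normal_density 0 s x * exp (c * x) = exp (c\<^sup>2 * s\<^sup>2 / 2) * normal_density (c * s\<^sup>2) s x"
proof -
  have "- x\<^sup>2 / (2 * s\<^sup>2) + c * x = c\<^sup>2 * s\<^sup>2 / 2 + (- (x - c * s\<^sup>2)\<^sup>2 / (2 * s\<^sup>2))"
    using assms by (simp add: field_simps power2_eq_square)
  then show ?thesis
    unfolding normal_density_def by (simp add: algebra_simps flip: exp_add)
qed

lemma nn_integral_normal_density_exp:
  assumes "s > 0"
  shows "(\<integral>\<^sup>+x. ennreal (normal_density 0 s x) * ennreal (exp (c * x)) \<partial>lborel)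
    = ennreal (exp (c\<^sup>2 * s\<^sup>2 / 2))"
proof -
  have "(\<integral>\<^sup>+x. ennreal (normal_density 0 s x) * ennreal (exp (c * x)) \<partial>lborel)
      = (\<integral>\<^sup>+x. ennreal (exp (c\<^sup>2 * s\<^sup>2 / 2)) * ennreal (normal_density (c * s\<^sup>2) s x) \<partial>lborel)"
    using assms by (intro nn_integral_cong) (simp add: normal_density_mult_exp flip: ennreal_mult')
  also have "\<dots> = ennreal (exp (c\<^sup>2 * s\<^sup>2 / 2))"
    using prob_space.emeasure_space_1[OF prob_space_normal_density[OF assms, of "c * s\<^sup>2"]]
    by (simp add: nn_integral_cmult emeasure_density)
  finally show ?thesis .
qed

lemma centered_normal_rv_nn_integral_exp_abs_le:
  assumes "prob_space M" and Y: "centered_normal_rv M Y"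
  shows "(\<integral>\<^sup>+\<omega>. ennreal (exp (c * \<bar>Y \<omega>\<bar>)) \<partial>M)
    \<le> 2 * ennreal (exp (c\<^sup>2 * (\<integral>\<omega>. (Y \<omega>)\<^sup>2 \<partial>M) / 2))"
proof -
  interpret prob_space M by (rule assms(1))
  have [measurable]: "Y \<in> borel_measurable M"
    using Y by (simp add: centered_normal_rv_def)
  show ?thesis
  proof (cases "AE \<omega> in M. Y \<omega> = 0")
    case True
    then have "(\<integral>\<^sup>+\<omega>. ennreal (exp (c * \<bar>Y \<omega>\<bar>)) \<partial>M) = 1"
      by (subst nn_integral_cong_AE[where v = "\<lambda>_. 1"]) (auto simp: emeasure_space_1)
    also have "\<dots> \<le> ennreal (2 * exp (c\<^sup>2 * (\<integral>\<omega>. (Y \<omega>)\<^sup>2 \<partial>M) / 2))"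
    proof -
      have "1 \<le> exp (c\<^sup>2 * (\<integral>\<omega>. (Y \<omega>)\<^sup>2 \<partial>M) / 2)"
        by simp
      then have "(1::real) \<le> 2 * exp (c\<^sup>2 * (\<integral>\<omega>. (Y \<omega>)\<^sup>2 \<partial>M) / 2)"
        by linarith
      then show ?thesis
        by (metis ennreal_1 ennreal_leI)
    qed
    finally show ?thesis by (simp add: ennreal_mult)
  next
    case False
    then obtain s where s: "s > 0" and D: "distributed M lborel Y (normal_density 0 s)"
      using Y by (auto simp: centered_normal_rv_def)
    have var: "(\<integral>\<omega>. (Y \<omega>)\<^sup>2 \<partial>M) = s\<^sup>2"
      using normal_distributed_variance[OF s D] normal_distributed_expectation[OF s D] by simp
    have mgf: "(\<integral>\<^sup>+\<omega>. ennreal (exp (d * Y \<omega>)) \<partial>M) = ennreal (exp (d\<^sup>2 * s\<^sup>2 / 2))" for d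
      using distributed_nn_integral[OF D, of "\<lambda>x. ennreal (exp (d * x))"]
        nn_integral_normal_density_exp[OF s, of d] by simp
    have "(\<integral>\<^sup>+\<omega>. ennreal (exp (c * \<bar>Y \<omega>\<bar>)) \<partial>M)
        \<le> (\<integral>\<^sup>+\<omega>. ennreal (exp (c * Y \<omega>)) + ennreal (exp ((-c) * Y \<omega>)) \<partial>M)"
      by (intro nn_integral_mono) (auto simp: abs_if simp flip: ennreal_plus)
    also have "\<dots> = ennreal (exp (c\<^sup>2 * s\<^sup>2 / 2)) + ennreal (exp ((-c)\<^sup>2 * s\<^sup>2 / 2))"
      using mgf[of c] mgf[of "-c"] by (simp add: nn_integral_add)
    finally show ?thesis by (simp add: var mult_2)
  qed
qed

lemma centered_gaussian_process_linear_combination: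
  assumes "centered_gaussian_process M I X" "finite F" "F \<subseteq> I"
  shows "centered_normal_rv M (\<lambda>\<omega>. \<Sum>t\<in>F. c t * X t \<omega>)"
  using assms unfolding centered_gaussian_process_def by blast

lemma centered_gaussian_process_point:
  assumes "centered_gaussian_process M I X" "t \<in> I"
  shows "centered_normal_rv M (X t)"
  using centered_gaussian_process_linear_combination[OF assms(1), of "{t}" "\<lambda>_. 1"] assms(2)
  by simp

lemma centered_gaussian_process_diff:
  assumes "centered_gaussian_process M I X" "t \<in> I" "s \<in> I"
  shows "centered_normal_rv M (\<lambda>\<omega>. X t \<omega> - X s \<omega>)"
proof (cases "t = s")
  case True
  then show ?thesis
    using centered_gaussian_process_point[OF assms(1,2)] by (simp add: centered_normal_rv_def)
next
  case False
  then show ?thesis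
    using centered_gaussian_process_linear_combination[OF assms(1), of "{t, s}"
        "\<lambda>u. if u = t then 1 else -1"] assms(2,3)
    by simp
qed

lemma nn_integral_exp_Max_abs_le:
  assumes "prob_space M" "finite I" "I \<noteq> {}"
    and Z: "\<And>i. i \<in> I \<Longrightarrow> centered_normal_rv M (Z i)"
    and var: "\<And>i. i \<in> I \<Longrightarrow> (\<integral>\<omega>. (Z i \<omega>)\<^sup>2 \<partial>M) \<le> v"
  shows "(\<integral>\<^sup>+\<omega>. ennreal (exp (c * (MAX i\<in>I. \<bar>Z i \<omega>\<bar>))) \<partial>M)
    \<le> ennreal (2 * real (card I) * exp (c\<^sup>2 * v / 2))"
proof -
  have [measurable]: "\<And>i. i \<in> I \<Longrightarrow> Z i \<in> borel_measurable M"
    using Z by (simp add: centered_normal_rv_def)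
  have "ennreal (exp (c * (MAX i\<in>I. \<bar>Z i \<omega>\<bar>))) \<le> (\<Sum>i\<in>I. ennreal (exp (c * \<bar>Z i \<omega>\<bar>)))" for \<omega>
  proof -
    have "(MAX i\<in>I. \<bar>Z i \<omega>\<bar>) \<in> (\<lambda>i. \<bar>Z i \<omega>\<bar>) ` I"
      using assms(2,3) by (intro Max_in) auto
    then obtain i0 where "i0 \<in> I" "(MAX i\<in>I. \<bar>Z i \<omega>\<bar>) = \<bar>Z i0 \<omega>\<bar>"
      by auto
    then show ?thesis
      using assms(2) member_le_sum[of i0 I "\<lambda>i. ennreal (exp (c * \<bar>Z i \<omega>\<bar>))"] by simp
  qed
  then have "(\<integral>\<^sup>+\<omega>. ennreal (exp (c * (MAX i\<in>I. \<bar>Z i \<omega>\<bar>))) \<partial>M)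
      \<le> (\<Sum>i\<in>I. (\<integral>\<^sup>+\<omega>. ennreal (exp (c * \<bar>Z i \<omega>\<bar>)) \<partial>M))"
    by (subst nn_integral_sum[symmetric]) (auto intro: nn_integral_mono)
  also have "\<dots> \<le> (\<Sum>i\<in>I. ennreal (2 * exp (c\<^sup>2 * v / 2)))"
  proof (rule sum_mono)
    fix i assume i: "i \<in> I"
    have "c\<^sup>2 * (\<integral>\<omega>. (Z i \<omega>)\<^sup>2 \<partial>M) / 2 \<le> c\<^sup>2 * v / 2"
      using var[OF i] by (simp add: mult_left_mono divide_right_mono)
    then show "(\<integral>\<^sup>+\<omega>. ennreal (exp (c * \<bar>Z i \<omega>\<bar>)) \<partial>M) \<le> ennreal (2 * exp (c\<^sup>2 * v / 2))"
      using centered_normal_rv_nn_integral_exp_abs_le[OF assms(1) Z[OF i], of c]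
      by (simp add: ennreal_mult order_trans[OF _ mult_left_mono[OF ennreal_leI]])
  qed
  also have "\<dots> = ennreal (\<Sum>i\<in>I. 2 * exp (c\<^sup>2 * v / 2))"
    by (rule sum_ennreal) simp
  also have "(\<Sum>i\<in>I. 2 * exp (c\<^sup>2 * v / 2)) = 2 * real (card I) * exp (c\<^sup>2 * v / 2)"
    by simp
  finally show ?thesis .
qed

text \<open>Generalised Hoelder inequality: the bound is the weighted geometric mean of the \<open>B j\<close>.\<close>

lemma nn_integral_exp_sum_le:
  assumes "finite J" and p: "\<And>j. j \<in> J \<Longrightarrow> p j > 0" and "(\<Sum>j\<in>J. p j) = 1"
    and [measurable]: "\<And>j. j \<in> J \<Longrightarrow> W j \<in> borel_measurable M"
    and B: "\<And>j. j \<in> J \<Longrightarrow> B j > 0"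
    and bound: "\<And>j. j \<in> J \<Longrightarrow> (\<integral>\<^sup>+\<omega>. ennreal (exp (W j \<omega> / p j)) \<partial>M) \<le> ennreal (B j)"
  shows "(\<integral>\<^sup>+\<omega>. ennreal (exp (\<Sum>j\<in>J. W j \<omega>)) \<partial>M) \<le> ennreal (exp (\<Sum>j\<in>J. p j * ln (B j)))"
proof -
  define L where "L = (\<Sum>j\<in>J. p j * ln (B j))"
  define q where "q j = exp L * (p j / B j)" for j
  have q: "q j \<ge> 0" if "j \<in> J" for j
    using p[OF that] B[OF that] by (simp add: q_def)
  have "exp (\<Sum>j\<in>J. W j \<omega>) \<le> (\<Sum>j\<in>J. q j * exp (W j \<omega> / p j))" for \<omega>
  proof -
    define u where "u j = W j \<omega> / p j - ln (B j)" for j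
    have "(\<Sum>j\<in>J. W j \<omega>) = (\<Sum>j\<in>J. p j * ln (B j) + p j * u j)"
      by (intro sum.cong refl) (simp add: u_def field_simps p[THEN less_imp_neq, THEN not_sym])
    then have "(\<Sum>j\<in>J. W j \<omega>) = L + (\<Sum>j\<in>J. p j *\<^sub>R u j)"
      by (simp add: L_def sum.distrib)
    then have "exp (\<Sum>j\<in>J. W j \<omega>) = exp L * exp (\<Sum>j\<in>J. p j *\<^sub>R u j)"
      by (simp add: exp_add)
    also have "exp (\<Sum>j\<in>J. p j *\<^sub>R u j) \<le> (\<Sum>j\<in>J. p j * exp (u j))"
      using convex_on_sum[OF \<open>finite J\<close> _ convex_on_exp[of 1], of p u] assms(3) p
      by (fastforce simp: less_imp_le)
    also have "(\<Sum>j\<in>J. p j * exp (u j)) = (\<Sum>j\<in>J. (p j / B j) * exp (W j \<omega> / p j))"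
      unfolding u_def using B by (intro sum.cong) (simp_all add: exp_diff)
    finally show ?thesis
      by (simp add: q_def sum_distrib_left mult.assoc mult_left_mono)
  qed
  then have "(\<integral>\<^sup>+\<omega>. ennreal (exp (\<Sum>j\<in>J. W j \<omega>)) \<partial>M)
      \<le> (\<integral>\<^sup>+\<omega>. (\<Sum>j\<in>J. ennreal (q j) * ennreal (exp (W j \<omega> / p j))) \<partial>M)"
    using q by (intro nn_integral_mono) (simp add: ennreal_leI sum_ennreal flip: ennreal_mult)
  also have "\<dots> = (\<Sum>j\<in>J. ennreal (q j) * (\<integral>\<^sup>+\<omega>. ennreal (exp (W j \<omega> / p j)) \<partial>M))"
    by (subst nn_integral_sum) (auto intro!: sum.cong nn_integral_cmult)
  also have "\<dots> \<le> (\<Sum>j\<in>J. ennreal (q j) * ennreal (B j))"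
    by (intro sum_mono mult_left_mono bound) auto
  also have "\<dots> = ennreal (\<Sum>j\<in>J. exp L * p j)"
    using q B p by (simp add: q_def sum_ennreal less_imp_le B[THEN less_imp_neq, THEN not_sym]
        flip: ennreal_mult)
  finally show ?thesis
    using assms(3) by (simp add: L_def flip: sum_distrib_left)
qed

lemma nn_integral_exp_sum_Max_abs_le:
  assumes "prob_space M" "finite J"
    and p: "\<And>j. j \<in> J \<Longrightarrow> p j > 0" and "(\<Sum>j\<in>J. p j) = 1"
    and S: "\<And>j. j \<in> J \<Longrightarrow> finite (S j)" "\<And>j. j \<in> J \<Longrightarrow> S j \<noteq> {}"
    and Z: "\<And>j s. j \<in> J \<Longrightarrow> s \<in> S j \<Longrightarrow> centered_normal_rv M (Z j s)"
    and var: "\<And>j s. j \<in> J \<Longrightarrow> s \<in> S j \<Longrightarrow> (\<integral>\<omega>. (Z j s \<omega>)\<^sup>2 \<partial>M) \<le> v j"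
  shows "(\<integral>\<^sup>+\<omega>. ennreal (exp (c * (\<Sum>j\<in>J. MAX s\<in>S j. \<bar>Z j s \<omega>\<bar>))) \<partial>M)
    \<le> ennreal (2 * exp (\<Sum>j\<in>J. p j * ln (card (S j))) * exp (c\<^sup>2 / 2 * (\<Sum>j\<in>J. v j / p j)))"
proof -
  define B where "B j = 2 * real (card (S j)) * exp ((c / p j)\<^sup>2 * v j / 2)" for j
  have card: "real (card (S j)) > 0" if "j \<in> J" for j
    using S[OF that] by (simp add: card_gt_0_iff)
  have "(\<integral>\<^sup>+\<omega>. ennreal (exp (\<Sum>j\<in>J. c * (MAX s\<in>S j. \<bar>Z j s \<omega>\<bar>))) \<partial>M)
      \<le> ennreal (exp (\<Sum>j\<in>J. p j * ln (B j)))"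
  proof (rule nn_integral_exp_sum_le[OF assms(2) p assms(4)])
    fix j assume j: "j \<in> J"
    have [measurable]: "s \<in> S j \<Longrightarrow> Z j s \<in> borel_measurable M" for s
      using Z[OF j] by (simp add: centered_normal_rv_def)
    show "(\<lambda>\<omega>. c * (MAX s\<in>S j. \<bar>Z j s \<omega>\<bar>)) \<in> borel_measurable M"
      using S[OF j] by measurable
    show "B j > 0"
      using card[OF j] by (simp add: B_def)
    show "(\<integral>\<^sup>+\<omega>. ennreal (exp (c * (MAX s\<in>S j. \<bar>Z j s \<omega>\<bar>) / p j)) \<partial>M) \<le> ennreal (B j)"
      using nn_integral_exp_Max_abs_le[OF assms(1) S[OF j] Z[OF j] var[OF j], where c = "c / p j"]
      by (simp add: B_def)
  qed
  also have "(\<Sum>j\<in>J. p j * ln (B j))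
      = ln 2 + (\<Sum>j\<in>J. p j * ln (card (S j))) + c\<^sup>2 / 2 * (\<Sum>j\<in>J. v j / p j)"
  proof -
    have "p j * ln (B j) = p j * ln 2 + p j * ln (card (S j)) + c\<^sup>2 / 2 * (v j / p j)"
      if "j \<in> J" for j
      using card[OF that] p[OF that]
      by (simp add: B_def ln_mult field_simps power2_eq_square)
    then show ?thesis
      using assms(4) by (simp add: sum.distrib sum_distrib_left flip: sum_distrib_right)
  qed
  finally show ?thesis
    by (simp add: exp_add sum_distrib_left)
qed

definition geom_weight :: "real \<Rightarrow> nat \<Rightarrow> nat \<Rightarrow> real" where
  "geom_weight \<theta> K j = (if j < K then \<theta>^j * (1 - \<theta>) else \<theta>^K)"

lemma geom_weight_pos: "0 < \<theta> \<Longrightarrow> \<theta> < 1 \<Longrightarrow> geom_weight \<theta> K j > 0"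
  by (simp add: geom_weight_def)

lemma sum_geom_weight: "(\<Sum>j\<le>K. geom_weight \<theta> K j) = 1"
proof -
  have "(\<Sum>j<K. \<theta>^j * (1 - \<theta>)) + \<theta>^K = 1"
    by (induction K) (auto simp: algebra_simps)
  then show ?thesis
    by (simp add: geom_weight_def lessThan_Suc_atMost[symmetric] add.commute)
qed

lemma sum_geometric_variance_div_geom_weight_le:
  assumes "0 < \<theta>" "\<theta> < 1"
  shows "(\<Sum>j\<le>K. (\<theta>^j * m)\<^sup>2 / geom_weight \<theta> K j) \<le> m\<^sup>2 / (1 - \<theta>)\<^sup>2"
proof -
  have cancel: "(t * m)\<^sup>2 / (t * d) = t * d * (m\<^sup>2 / d\<^sup>2)" if "t \<noteq> 0" "d \<noteq> 0" for t d :: real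
    using that by (simp add: power2_eq_square field_simps)
  have "(\<theta>^j * m)\<^sup>2 / geom_weight \<theta> K j \<le> geom_weight \<theta> K j * (m\<^sup>2 / (1 - \<theta>)\<^sup>2)"
    if "j \<le> K" for j
  proof (cases "j < K")
    case True
    then show ?thesis
      using assms cancel[of "\<theta>^j" "1 - \<theta>"] by (simp add: geom_weight_def)
  next
    case False
    with that have "j = K" by simp
    have "m\<^sup>2 * (1 - \<theta>)\<^sup>2 \<le> m\<^sup>2"
      using assms by (intro mult_left_le power_le_one) auto
    then have "\<theta>^K * m\<^sup>2 \<le> \<theta>^K * m\<^sup>2 / (1 - \<theta>)\<^sup>2"
      using assms by (simp add: le_divide_eq)
    then show ?thesis
      using assms \<open>j = K\<close> by (simp add: geom_weight_def power2_eq_square field_simps)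
  qed
  then have "(\<Sum>j\<le>K. (\<theta>^j * m)\<^sup>2 / geom_weight \<theta> K j)
      \<le> (\<Sum>j\<le>K. geom_weight \<theta> K j * (m\<^sup>2 / (1 - \<theta>)\<^sup>2))"
    by (intro sum_mono) simp
  also have "\<dots> = m\<^sup>2 / (1 - \<theta>)\<^sup>2"
    by (subst sum_distrib_right[symmetric]) (simp add: sum_geom_weight)
  finally show ?thesis .
qed

lemma sigma_ginv_pos:
  assumes "(\<sigma> \<longlongrightarrow> 0) (at_right 0)" "v > 0"
  shows "sigma_ginv \<sigma> v > 0"
proof -
  obtain c where "c > 0" and c: "\<And>h. 0 < h \<Longrightarrow> h < c \<Longrightarrow> \<sigma> h < v"
    using order_tendstoD(2)[OF assms] unfolding eventually_at_right_field by auto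
  then have "ereal (c / 2) \<le> sigma_ginv \<sigma> v"
    unfolding sigma_ginv_def by (intro SUP_upper) (auto intro: less_imp_le)
  with \<open>c > 0\<close> show ?thesis
    by (metis ereal_less(2) half_gt_zero order_less_le_trans)
qed

lemma less_sigma_ginvD: "ereal x < sigma_ginv \<sigma> v \<Longrightarrow> \<exists>h>0. \<sigma> h \<le> v \<and> x < h"
  unfolding sigma_ginv_def less_SUP_iff by auto

lemma sigma_ginv_mono: "v \<le> w \<Longrightarrow> sigma_ginv \<sigma> v \<le> sigma_ginv \<sigma> w"
  unfolding sigma_ginv_def by (intro SUP_subset_mono) auto

lemma real_of_sigma_ginv_nonneg: "real_of_ereal (sigma_ginv \<sigma> v) \<ge> 0"
proof (cases "{h. 0 < h \<and> \<sigma> h \<le> v} = {}")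
  case True
  then show ?thesis
    unfolding sigma_ginv_def True by (simp add: bot_ereal_def)
next
  case False
  then obtain h where "h > 0" "\<sigma> h \<le> v" by auto
  then have "ereal h \<le> sigma_ginv \<sigma> v"
    unfolding sigma_ginv_def by (intro SUP_upper) auto
  with \<open>h > 0\<close> show ?thesis
    by (intro real_of_ereal_pos) (simp add: order_trans[OF _ \<open>ereal h \<le> _\<close>])
qed

definition covering_bound :: "(real \<Rightarrow> real) \<Rightarrow> real \<Rightarrow> real \<Rightarrow> real \<Rightarrow> real" where
  "covering_bound \<sigma> a b v =
     (if sigma_ginv \<sigma> v = \<infinity> then 0 else (b - a) / (2 * real_of_ereal (sigma_ginv \<sigma> v)))"

lemma I_tilde_covering_bound:
  "I_tilde r \<sigma> a b x = (\<integral>\<^sup>+ v\<in>{0..x}. ennreal (r (covering_bound \<sigma> a b v + 1)) \<partial>lborel)"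
  unfolding I_tilde_def covering_bound_def by simp

lemma covering_bound_nonneg: "a \<le> b \<Longrightarrow> covering_bound \<sigma> a b v \<ge> 0"
  using real_of_sigma_ginv_nonneg[of \<sigma> v] by (simp add: covering_bound_def)

lemma covering_bound_antimono:
  assumes "(\<sigma> \<longlongrightarrow> 0) (at_right 0)" "a \<le> b" "0 < v" "v \<le> w"
  shows "covering_bound \<sigma> a b w \<le> covering_bound \<sigma> a b v"
proof (cases "sigma_ginv \<sigma> w = \<infinity>")
  case True
  then show ?thesis
    using covering_bound_nonneg[OF assms(2)] by (simp add: covering_bound_def)
next
  case False
  have "0 < sigma_ginv \<sigma> v" "sigma_ginv \<sigma> v \<le> sigma_ginv \<sigma> w"
    using sigma_ginv_pos[OF assms(1,3)] sigma_ginv_mono[OF assms(4)] .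
  with False obtain x y where "sigma_ginv \<sigma> v = ereal x" "sigma_ginv \<sigma> w = ereal y" "0 < x" "x \<le> y"
    by (cases "sigma_ginv \<sigma> v"; cases "sigma_ginv \<sigma> w") auto
  then show ?thesis
    using assms(2) by (simp add: covering_bound_def divide_left_mono)
qed

text \<open>The net consists of the midpoints of \<open>\<lfloor>(b - a) / (2 h)\<rfloor> + 1\<close> subintervals of equal length.\<close>

lemma interval_finite_net:
  fixes a b h :: real
  assumes "a < b" "h > 0"
  obtains A where "finite A" "A \<noteq> {}" "A \<subseteq> {a..b}" "real (card A) \<le> (b - a) / (2 * h) + 1"
    "\<And>t. t \<in> {a..b} \<Longrightarrow> \<exists>s\<in>A. \<bar>t - s\<bar> < h"
proof -
  define n where "n = nat \<lfloor>(b - a) / (2 * h)\<rfloor> + 1"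
  define \<delta> where "\<delta> = (b - a) / real n"
  define c where "c i = a + (real i + 1/2) * \<delta>" for i :: nat
  have "(b - a) / (2 * h) > 0"
    using assms by simp
  then have "n \<ge> 1" "real n > (b - a) / (2 * h)" "real n \<le> (b - a) / (2 * h) + 1"
    unfolding n_def using assms by linarith+
  then have "\<delta> > 0" "\<delta> / 2 < h" "a + real n * \<delta> = b"
    using assms by (simp_all add: \<delta>_def field_simps)
  have "c i \<in> {a..b}" if "i < n" for i
  proof -
    have "0 \<le> (real i + 1/2) * \<delta>" "(real i + 1/2) * \<delta> \<le> real n * \<delta>"
      using that \<open>\<delta> > 0\<close> by (auto intro!: mult_right_mono)
    then show ?thesis
      using \<open>a + real n * \<delta> = b\<close> unfolding c_def atLeastAtMost_iff by linarith
  qed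
  moreover have "\<exists>i<n. \<bar>t - c i\<bar> < h" if t: "t \<in> {a..b}" for t
  proof -
    define i where "i = min (n - 1) (nat \<lfloor>(t - a) / \<delta>\<rfloor>)"
    have "0 \<le> (t - a) / \<delta>" "(t - a) / \<delta> \<le> real n"
      using t \<open>\<delta> > 0\<close> \<open>a + real n * \<delta> = b\<close> by (auto simp: field_simps)
    then have "real i \<le> (t - a) / \<delta>" "(t - a) / \<delta> \<le> real i + 1"
      using \<open>n \<ge> 1\<close> unfolding i_def by (auto simp: min_def of_nat_diff) linarith+
    then have "\<bar>(t - a) / \<delta> - (real i + 1/2)\<bar> \<le> 1/2"
      unfolding abs_le_iff by linarith
    have "t - c i = ((t - a) / \<delta> - (real i + 1/2)) * \<delta>"
      using \<open>\<delta> > 0\<close> by (simp add: c_def field_simps)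
    then have "\<bar>t - c i\<bar> = \<bar>(t - a) / \<delta> - (real i + 1/2)\<bar> * \<delta>"
      using \<open>\<delta> > 0\<close> by (simp add: abs_mult)
    also have "\<dots> \<le> (1/2) * \<delta>"
      using \<open>\<bar>_\<bar> \<le> 1/2\<close> \<open>\<delta> > 0\<close> by (intro mult_right_mono) auto
    finally have "\<bar>t - c i\<bar> < h"
      using \<open>\<delta> / 2 < h\<close> by simp
    moreover have "i < n"
      using \<open>n \<ge> 1\<close> by (simp add: i_def)
    ultimately show ?thesis by blast
  qed
  moreover have "real (card (c ` {..<n})) \<le> (b - a) / (2 * h) + 1"
    using card_image_le[of "{..<n}" c] \<open>real n \<le> _\<close> by simp
  ultimately show ?thesis
    using \<open>n \<ge> 1\<close> by (intro that[of "c ` {..<n}"]) auto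
qed

lemma sigma_ginv_net:
  assumes "a < b" "(\<sigma> \<longlongrightarrow> 0) (at_right 0)" "v > 0"
  obtains A where "finite A" "A \<noteq> {}" "A \<subseteq> {a..b}" "real (card A) \<le> covering_bound \<sigma> a b v + 1"
    "\<And>t. t \<in> {a..b} \<Longrightarrow> \<exists>s\<in>A. ereal \<bar>t - s\<bar> < sigma_ginv \<sigma> v"
proof (cases "sigma_ginv \<sigma> v = \<infinity>")
  case True
  then show ?thesis
    using assms(1) by (intro that[of "{a}"]) (auto simp: covering_bound_def)
next
  case False
  with sigma_ginv_pos[OF assms(2,3)] obtain h where h: "sigma_ginv \<sigma> v = ereal h" "h > 0"
    by (cases "sigma_ginv \<sigma> v") auto
  then show ?thesis
    using interval_finite_net[OF assms(1) \<open>h > 0\<close>] that by (auto simp: covering_bound_def)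
qed

lemma nn_integral_ge_sum_disjoint_intervals:
  fixes f :: "real \<Rightarrow> real"
  assumes "finite J" "disjoint_family_on (\<lambda>j. {lo j<..hi j}) J"
    and "\<And>j. j \<in> J \<Longrightarrow> lo j \<le> hi j" "\<And>j. j \<in> J \<Longrightarrow> 0 \<le> c j"
    and "\<And>j. j \<in> J \<Longrightarrow> {lo j<..hi j} \<subseteq> S"
    and "\<And>j v. j \<in> J \<Longrightarrow> v \<in> {lo j<..hi j} \<Longrightarrow> c j \<le> f v"
  shows "ennreal (\<Sum>j\<in>J. c j * (hi j - lo j)) \<le> (\<integral>\<^sup>+v\<in>S. ennreal (f v) \<partial>lborel)"
proof -
  have "ennreal (\<Sum>j\<in>J. c j * (hi j - lo j)) = (\<Sum>j\<in>J. ennreal (c j) * emeasure lborel {lo j<..hi j})"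
    using assms(3,4) by (subst sum_ennreal[symmetric]) (auto intro!: sum.cong simp: ennreal_mult)
  also have "\<dots> = (\<integral>\<^sup>+v. (\<Sum>j\<in>J. ennreal (c j) * indicator {lo j<..hi j} v) \<partial>lborel)"
    by (subst nn_integral_sum) (auto intro!: sum.cong simp: nn_integral_cmult_indicator)
  also have "\<dots> \<le> (\<integral>\<^sup>+v\<in>S. ennreal (f v) \<partial>lborel)"
  proof (rule nn_integral_mono)
    fix v
    have "(\<Sum>j\<in>J. ennreal (c j) * indicator {lo j<..hi j} v)
        \<le> (\<Sum>j\<in>J. ennreal (f v) * indicator {lo j<..hi j} v)"
      using assms(6) by (intro sum_mono) (auto simp: indicator_def intro: ennreal_leI)
    also have "\<dots> = ennreal (f v) * indicator (\<Union>j\<in>J. {lo j<..hi j}) v"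
      using assms(1,2) by (simp add: indicator_UN_disjoint sum_distrib_left)
    also have "\<dots> \<le> ennreal (f v) * indicator S v"
      by (intro mult_left_mono indicator_leI) (auto intro: assms(5)[THEN subsetD])
    finally show "(\<Sum>j\<in>J. ennreal (c j) * indicator {lo j<..hi j} v) \<le> ennreal (f v) * indicator S v" .
  qed
  finally show ?thesis .
qed

text \<open>The intervals \<open>(\<theta>^(j+2) m, \<theta>^(j+1) m]\<close>, \<open>j < K\<close>, and \<open>(0, \<theta>^(K+1) m]\<close> tile \<open>(0, \<theta> m]\<close>, and on
  each of them the antitone integrand is bounded below by its value at the right end point.\<close>

lemma I_tilde_ge_geometric_sum:
  fixes r \<sigma> :: "real \<Rightarrow> real"
  assumes "a \<le> b" "(\<sigma> \<longlongrightarrow> 0) (at_right 0)" "mono_on {1..} r" "\<forall>x\<ge>1. r x \<ge> 0"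
    and "0 < \<theta>" "\<theta> < 1" "m > 0"
  shows "ennreal (\<theta> * m * (\<Sum>j\<le>K. geom_weight \<theta> K j *
            r (if j < K then covering_bound \<sigma> a b (\<theta>^(j+1) * m) + 1 else 1)))
    \<le> I_tilde r \<sigma> a b (\<theta> * m)"
proof -
  define hi where "hi j = \<theta>^(j+1) * m" for j :: nat
  define lo where "lo j = (if j < K then \<theta>^(j+2) * m else 0)" for j
  define c where "c j = r (if j < K then covering_bound \<sigma> a b (hi j) + 1 else 1)" for j
  have pow_le: "\<theta>^k * m \<le> \<theta>^l * m" if "l \<le> k" for k l
    using assms(5-7) that by (intro mult_right_mono power_decreasing) auto
  have lo_nonneg: "0 \<le> lo j" for j
    using assms(5-7) by (simp add: lo_def)
  have sep: "hi j \<le> lo i" if "i < j" "j \<le> K" for i j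
    using that pow_le[of "i + 2" "j + 1"] by (simp add: hi_def lo_def)
  have "disjoint_family_on (\<lambda>j. {lo j<..hi j}) {..K}"
    unfolding disjoint_family_on_def
    by (metis (no_types, lifting) atMost_iff disjoint_iff greaterThanAtMost_iff linorder_neq_iff
        order.trans not_less sep)
  moreover have "lo j \<le> hi j" for j
    using pow_le[of "j + 1" "j + 2"] assms(5-7) by (simp add: hi_def lo_def)
  moreover have "{lo j<..hi j} \<subseteq> {0..\<theta> * m}" for j
  proof -
    have "hi j \<le> \<theta> * m"
      using assms(5-7) by (simp add: hi_def power_le_one)
    then show ?thesis
      using lo_nonneg[of j] by auto
  qed
  moreover have "0 \<le> c j" for j
    using assms(4) covering_bound_nonneg[OF assms(1)] by (simp add: c_def)
  moreover have "c j \<le> r (covering_bound \<sigma> a b v + 1)" if "j \<le> K" "v \<in> {lo j<..hi j}" for j v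
  proof -
    have "0 < v"
      using that lo_nonneg[of j] by simp
    then have "covering_bound \<sigma> a b (hi j) \<le> covering_bound \<sigma> a b v"
      using that by (intro covering_bound_antimono[OF assms(2,1)]) auto
    then show ?thesis
      unfolding c_def using covering_bound_nonneg[OF assms(1)]
      by (auto intro!: mono_onD[OF assms(3)])
  qed
  ultimately have "ennreal (\<Sum>j\<le>K. c j * (hi j - lo j)) \<le> I_tilde r \<sigma> a b (\<theta> * m)"
    unfolding I_tilde_covering_bound by (intro nn_integral_ge_sum_disjoint_intervals) auto
  moreover have "(\<Sum>j\<le>K. c j * (hi j - lo j)) = \<theta> * m * (\<Sum>j\<le>K. geom_weight \<theta> K j *
      r (if j < K then covering_bound \<sigma> a b (\<theta>^(j+1) * m) + 1 else 1))"
    unfolding sum_distrib_left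
    by (intro sum.cong refl) (simp add: c_def hi_def lo_def geom_weight_def algebra_simps)
  ultimately show ?thesis
    by simp
qed

lemma exp_sum_geom_weight_ln_le_r_ginv:
  fixes r \<sigma> :: "real \<Rightarrow> real" and n :: "nat \<Rightarrow> real"
  assumes "a \<le> b" "(\<sigma> \<longlongrightarrow> 0) (at_right 0)" "mono_on {1..} r" "\<forall>x\<ge>1. r x \<ge> 0"
    and convex: "convex_on {0..} (\<lambda>y. r (exp y))"
    and "0 < \<theta>" "\<theta> < 1" "m > 0"
    and n: "\<And>j. j < K \<Longrightarrow> 1 \<le> n j \<and> n j \<le> covering_bound \<sigma> a b (\<theta>^(j+1) * m) + 1"
  shows "ennreal (exp (\<Sum>j<K. geom_weight \<theta> K j * ln (n j)))
    \<le> r_ginv r (I_tilde r \<sigma> a b (\<theta> * m) / ennreal (\<theta> * m))"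
proof -
  define w where "w = geom_weight \<theta> K"
  define y where "y j = (if j < K then ln (n j) else 0)" for j
  define u where "u = exp (\<Sum>j<K. w j * ln (n j))"
  define Q where "Q = (\<Sum>j\<le>K. w j * r (if j < K then covering_bound \<sigma> a b (\<theta>^(j+1) * m) + 1 else 1))"
  have w: "w j > 0" for j
    using assms(6,7) by (simp add: w_def geom_weight_pos)
  have u_eq: "u = exp (\<Sum>j\<le>K. w j *\<^sub>R y j)"
    by (simp add: u_def y_def lessThan_Suc_atMost[symmetric])
  have exp_y: "exp (y j) = (if j < K then n j else 1)" for j
    using n[of j] by (auto simp: y_def)
  have "u \<ge> 1"
    using n w by (auto simp: u_def less_imp_le intro!: sum_nonneg)
  have "r u \<le> (\<Sum>j\<le>K. w j * r (exp (y j)))"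
    unfolding u_eq using n w by (intro convex_on_sum[OF _ _ convex]) (auto simp: w_def sum_geom_weight y_def less_imp_le)
  also have "\<dots> \<le> Q"
    unfolding Q_def using n w covering_bound_nonneg[OF assms(1)]
    by (intro sum_mono mult_left_mono mono_onD[OF assms(3)]) (auto simp: exp_y less_imp_le)
  finally have "ennreal (r u) \<le> ennreal Q"
    by (rule ennreal_leI)
  also have "ennreal Q = ennreal Q * ennreal (\<theta> * m) / ennreal (\<theta> * m)"
    using assms(6,8) by (intro ennreal_mult_divide_eq[symmetric]) auto
  also have "\<dots> = ennreal (\<theta> * m * Q) / ennreal (\<theta> * m)"
    using assms(6,8) by (simp add: ennreal_mult'' mult_ac)
  also have "\<dots> \<le> I_tilde r \<sigma> a b (\<theta> * m) / ennreal (\<theta> * m)"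
    unfolding Q_def w_def by (intro divide_right_mono_ennreal I_tilde_ge_geometric_sum assms(1-4,6-8))
  finally have "ennreal u \<le> r_ginv r (I_tilde r \<sigma> a b (\<theta> * m) / ennreal (\<theta> * m))"
    unfolding r_ginv_def using \<open>u \<ge> 1\<close> by (intro SUP_upper) auto
  then show ?thesis
    by (simp add: u_def w_def)
qed

lemma abs_le_sum_chain:
  fixes x :: "'i \<Rightarrow> real" and P :: "nat \<Rightarrow> 'i set" and \<pi> :: "nat \<Rightarrow> 'i \<Rightarrow> 'i"
  assumes "\<And>s. s \<in> P 0 \<Longrightarrow> \<bar>x s\<bar> \<le> w 0"
    and "\<And>j s. j < k \<Longrightarrow> s \<in> P (Suc j) \<Longrightarrow>
           \<pi> (Suc j) s \<in> P j \<and> \<bar>x s - x (\<pi> (Suc j) s)\<bar> \<le> w (Suc j)"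
    and "s \<in> P k"
  shows "\<bar>x s\<bar> \<le> (\<Sum>j\<le>k. w j)"
proof -
  have "\<bar>x s\<bar> \<le> (\<Sum>j\<le>l. w j)" if "l \<le> k" "s \<in> P l" for l s
    using that
  proof (induction l arbitrary: s)
    case 0
    then show ?case using assms(1) by simp
  next
    case (Suc l)
    then have "\<pi> (Suc l) s \<in> P l" "\<bar>x s - x (\<pi> (Suc l) s)\<bar> \<le> w (Suc l)"
      using assms(2) by auto
    moreover have "\<bar>x (\<pi> (Suc l) s)\<bar> \<le> (\<Sum>j\<le>l. w j)"
      using Suc.IH Suc.prems(1) \<open>\<pi> (Suc l) s \<in> P l\<close> by simp
    ultimately show ?case by simp
  qed
  then show ?thesis using assms(3) by simp
qed

text \<open>Level \<open>0\<close> of the chain is the net \<open>A 1\<close>; level \<open>j\<close> with \<open>0 < j < K\<close> links the points of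
  \<open>A (j + 1)\<close> to \<open>A j\<close> through \<open>\<pi> j\<close>, and level \<open>K\<close> links \<open>T\<close> to \<open>A K\<close>.\<close>

definition chain_level :: "(nat \<Rightarrow> 'i set) \<Rightarrow> 'i set \<Rightarrow> nat \<Rightarrow> nat \<Rightarrow> 'i set" where
  "chain_level A T K j = (if j < K then A (Suc j) else T)"

definition chain_link :: "('i \<Rightarrow> real) \<Rightarrow> (nat \<Rightarrow> 'i \<Rightarrow> 'i) \<Rightarrow> nat \<Rightarrow> 'i \<Rightarrow> real" where
  "chain_link x \<pi> j s = (if j = 0 then x s else x s - x (\<pi> j s))"

lemma abs_le_sum_Max_chain_link:
  assumes "\<And>k. finite (A k)" "\<And>k. A k \<subseteq> I" "\<And>k s. s \<in> I \<Longrightarrow> \<pi> k s \<in> A k"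
    and "finite T" "T \<subseteq> I" "t \<in> T"
  shows "\<bar>x t\<bar> \<le> (\<Sum>j\<le>K. MAX s\<in>chain_level A T K j. \<bar>chain_link x \<pi> j s\<bar>)"
proof (rule abs_le_sum_chain[where P = "chain_level A T K" and \<pi> = \<pi>])
  have finite: "finite (chain_level A T K j)" for j
    using assms(1,4) by (simp add: chain_level_def)
  show "\<bar>x s\<bar> \<le> (MAX s\<in>chain_level A T K 0. \<bar>chain_link x \<pi> 0 s\<bar>)"
    if "s \<in> chain_level A T K 0" for s
  proof -
    have "\<bar>chain_link x \<pi> 0 s\<bar> \<le> (MAX s\<in>chain_level A T K 0. \<bar>chain_link x \<pi> 0 s\<bar>)"
      using finite that by (intro Max_ge) auto
    then show ?thesis
      by (simp add: chain_link_def)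
  qed
  show "\<pi> (Suc j) s \<in> chain_level A T K j \<and>
      \<bar>x s - x (\<pi> (Suc j) s)\<bar> \<le> (MAX s\<in>chain_level A T K (Suc j). \<bar>chain_link x \<pi> (Suc j) s\<bar>)"
    if "j < K" "s \<in> chain_level A T K (Suc j)" for j s
  proof
    have "s \<in> I"
      using that(2) assms(2,5) by (auto simp: chain_level_def split: if_splits)
    then show "\<pi> (Suc j) s \<in> chain_level A T K j"
      using that(1) assms(3) by (simp add: chain_level_def)
    have "\<bar>chain_link x \<pi> (Suc j) s\<bar> \<le> (MAX s\<in>chain_level A T K (Suc j). \<bar>chain_link x \<pi> (Suc j) s\<bar>)"
      using finite that(2) by (intro Max_ge) auto
    then show "\<bar>x s - x (\<pi> (Suc j) s)\<bar> \<le> (MAX s\<in>chain_level A T K (Suc j). \<bar>chain_link x \<pi> (Suc j) s\<bar>)"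
      by (simp add: chain_link_def)
  qed
  show "t \<in> chain_level A T K K"
    using assms(6) by (simp add: chain_level_def)
qed

lemma nn_integral_SUP_countable_le:
  fixes f :: "'i \<Rightarrow> 'a \<Rightarrow> ennreal"
  assumes "countable S" and meas: "\<And>s. s \<in> S \<Longrightarrow> f s \<in> borel_measurable M"
    and finite_le: "\<And>T. finite T \<Longrightarrow> T \<subseteq> S \<Longrightarrow> (\<integral>\<^sup>+\<omega>. (SUP t\<in>T. f t \<omega>) \<partial>M) \<le> C"
  shows "(\<integral>\<^sup>+\<omega>. (SUP s\<in>S. f s \<omega>) \<partial>M) \<le> C"
proof (cases "S = {}")
  case True
  then show ?thesis using finite_le[of "{}"] by simp
next
  case False
  define e where "e = from_nat_into S"
  define F where "F n \<omega> = (SUP t\<in>e ` {..n}. f t \<omega>)" for n \<omega>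
  have sub: "e ` {..n} \<subseteq> S" for n
    using False by (auto simp: e_def intro: from_nat_into)
  have "S = (\<Union>n. e ` {..n})"
    using range_from_nat_into[OF False assms(1)] by (simp add: e_def UN_atMost_UNIV flip: image_UN)
  then have "(SUP s\<in>S. f s \<omega>) = (SUP n. F n \<omega>)" for \<omega>
    unfolding F_def by (simp add: SUP_UNION)
  moreover have "incseq F"
    unfolding incseq_def F_def le_fun_def by (auto intro!: SUP_subset_mono)
  moreover have "F n \<in> borel_measurable M" for n
    unfolding F_def using sub[of n] meas by (intro borel_measurable_SUP) auto
  ultimately have "(\<integral>\<^sup>+\<omega>. (SUP s\<in>S. f s \<omega>) \<partial>M) = (SUP n. integral\<^sup>N M (F n))"
    by (simp add: nn_integral_monotone_convergence_SUP)
  also have "\<dots> \<le> C"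
    unfolding F_def using sub by (intro SUP_least finite_le) auto
  finally show ?thesis .
qed

lemma separable_process_nn_integral_SUP_le:
  fixes g :: "real \<Rightarrow> ennreal"
  assumes "separable_process M I X" "continuous_on UNIV g"
  obtains S where "countable S" "S \<subseteq> I"
    "(\<integral>\<^sup>+\<omega>. (SUP t\<in>I. g (X t \<omega>)) \<partial>M) \<le> (\<integral>\<^sup>+\<omega>. (SUP s\<in>S. g (X s \<omega>)) \<partial>M)"
proof -
  obtain S N where S: "countable S" "S \<subseteq> I" "N \<in> null_sets M"
    and dense: "\<And>\<omega> t. \<omega> \<in> space M - N \<Longrightarrow> t \<in> I \<Longrightarrow> (t, X t \<omega>) \<in> closure ((\<lambda>s. (s, X s \<omega>)) ` S)"
    using assms(1) unfolding separable_process_def null_sets_def by blast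
  have pointwise: "(SUP t\<in>I. g (X t \<omega>)) \<le> (SUP s\<in>S. g (X s \<omega>))" if "\<omega> \<in> space M - N" for \<omega>
  proof (rule SUP_least)
    fix t assume "t \<in> I"
    define C where "C = (SUP s\<in>S. g (X s \<omega>))"
    have "continuous_on UNIV (\<lambda>p :: real \<times> real. g (snd p))"
      by (rule continuous_on_compose2[OF assms(2)]) (auto intro: continuous_intros)
    then have "closed {p :: real \<times> real. g (snd p) \<le> C}"
      by (intro closed_Collect_le continuous_intros)
    moreover have "(\<lambda>s. (s, X s \<omega>)) ` S \<subseteq> {p. g (snd p) \<le> C}"
      by (auto simp: C_def intro: SUP_upper)
    ultimately have "closure ((\<lambda>s. (s, X s \<omega>)) ` S) \<subseteq> {p. g (snd p) \<le> C}"
      by (rule closure_minimal[rotated])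
    then show "g (X t \<omega>) \<le> C"
      using dense[OF that \<open>t \<in> I\<close>] by auto
  qed
  have "AE \<omega> in M. (SUP t\<in>I. g (X t \<omega>)) \<le> (SUP s\<in>S. g (X s \<omega>))"
    using AE_not_in[OF S(3)] AE_space by eventually_elim (auto intro: pointwise)
  then show ?thesis
    using S(1,2) by (intro that nn_integral_mono_AE)
qed

locale gaussian_chaining =
  fixes M :: "'a measure" and X :: "real \<Rightarrow> 'a \<Rightarrow> real"
    and a b m \<theta> :: real and \<sigma> r :: "real \<Rightarrow> real"
  assumes prob: "prob_space M" and ab: "a < b"
    and gaussian: "centered_gaussian_process M {a..b} X"
    and variance: "\<And>t. t \<in> {a..b} \<Longrightarrow> (\<integral>\<omega>. (X t \<omega>)\<^sup>2 \<partial>M) \<le> m\<^sup>2"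
    and m_pos: "m > 0"
    and \<sigma>_tendsto: "(\<sigma> \<longlongrightarrow> 0) (at_right 0)"
    and increment: "\<And>h s t. h > 0 \<Longrightarrow> s \<in> {a..b} \<Longrightarrow> t \<in> {a..b} \<Longrightarrow> \<bar>t - s\<bar> < h \<Longrightarrow>
            sqrt (\<integral>\<omega>. (X t \<omega> - X s \<omega>)\<^sup>2 \<partial>M) \<le> \<sigma> h"
    and r_mono: "mono_on {1..} r" and r_nonneg: "\<forall>x\<ge>1. r x \<ge> 0"
    and r_convex: "convex_on {0..} (\<lambda>y. r (exp y))"
    and \<theta>_pos: "0 < \<theta>" and \<theta>_less_1: "\<theta> < 1"
begin

lemma increment_variance_le:
  assumes "s \<in> {a..b}" "t \<in> {a..b}" "ereal \<bar>t - s\<bar> < sigma_ginv \<sigma> v"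
  shows "(\<integral>\<omega>. (X t \<omega> - X s \<omega>)\<^sup>2 \<partial>M) \<le> v\<^sup>2"
proof -
  obtain h where "h > 0" "\<sigma> h \<le> v" "\<bar>t - s\<bar> < h"
    using less_sigma_ginvD[OF assms(3)] by blast
  then have "sqrt (\<integral>\<omega>. (X t \<omega> - X s \<omega>)\<^sup>2 \<partial>M) \<le> v"
    using increment[of h s t] assms(1,2) by simp
  moreover have "(\<integral>\<omega>. (X t \<omega> - X s \<omega>)\<^sup>2 \<partial>M) \<ge> 0"
    by simp
  ultimately show ?thesis
    using real_sqrt_le_iff real_sqrt_pow2 by (metis power_mono real_sqrt_ge_zero)
qed

definition chaining_net :: "(nat \<Rightarrow> real set) \<Rightarrow> (nat \<Rightarrow> real \<Rightarrow> real) \<Rightarrow> bool" where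
  "chaining_net A \<pi> \<longleftrightarrow>
     (\<forall>k. finite (A k) \<and> A k \<noteq> {} \<and> A k \<subseteq> {a..b} \<and>
        real (card (A k)) \<le> covering_bound \<sigma> a b (\<theta>^k * m) + 1) \<and>
     (\<forall>k. \<forall>t\<in>{a..b}. \<pi> k t \<in> A k \<and> (\<integral>\<omega>. (X t \<omega> - X (\<pi> k t) \<omega>)\<^sup>2 \<partial>M) \<le> (\<theta>^k * m)\<^sup>2)"

lemma chaining_net_exists: "\<exists>A \<pi>. chaining_net A \<pi>"
proof -
  have "\<exists>A. finite A \<and> A \<noteq> {} \<and> A \<subseteq> {a..b} \<and> real (card A) \<le> covering_bound \<sigma> a b (\<theta>^k * m) + 1 \<and>
      (\<forall>t\<in>{a..b}. \<exists>s\<in>A. ereal \<bar>t - s\<bar> < sigma_ginv \<sigma> (\<theta>^k * m))" for k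
  proof -
    have "\<theta>^k * m > 0"
      using \<theta>_pos m_pos by simp
    show ?thesis
      by (rule sigma_ginv_net[OF ab \<sigma>_tendsto \<open>\<theta>^k * m > 0\<close>]) auto
  qed
  then obtain A where A: "\<And>k. finite (A k) \<and> A k \<noteq> {} \<and> A k \<subseteq> {a..b} \<and>
        real (card (A k)) \<le> covering_bound \<sigma> a b (\<theta>^k * m) + 1"
      "\<And>k t. t \<in> {a..b} \<Longrightarrow> \<exists>s\<in>A k. ereal \<bar>t - s\<bar> < sigma_ginv \<sigma> (\<theta>^k * m)"
    by metis
  have "\<forall>k t. \<exists>s. t \<in> {a..b} \<longrightarrow> s \<in> A k \<and> ereal \<bar>t - s\<bar> < sigma_ginv \<sigma> (\<theta>^k * m)"
    using A(2) by blast
  then obtain \<pi> where \<pi>: "\<And>k t. t \<in> {a..b} \<Longrightarrow> \<pi> k t \<in> A k \<and> ereal \<bar>t - \<pi> k t\<bar> < sigma_ginv \<sigma> (\<theta>^k * m)"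
    by metis
  moreover have "\<pi> k t \<in> {a..b}" if "t \<in> {a..b}" for k t
    using \<pi>[OF that] A(1) by blast
  ultimately have "chaining_net A \<pi>"
    unfolding chaining_net_def using A(1)
    by (auto intro!: increment_variance_le simp: abs_minus_commute)
  then show ?thesis by blast
qed

lemma nn_integral_exp_sum_Max_chain_link_le:
  assumes "chaining_net A \<pi>" "finite T" "T \<noteq> {}" "T \<subseteq> {a..b}"
  shows "(\<integral>\<^sup>+\<omega>. ennreal (exp (lam * (\<Sum>j\<le>K. MAX s\<in>chain_level A T K j.
        \<bar>chain_link (\<lambda>s. X s \<omega>) \<pi> j s\<bar>))) \<partial>M)
    \<le> ennreal (2 * exp (\<Sum>j\<le>K. geom_weight \<theta> K j * ln (card (chain_level A T K j)))
        * exp (lam\<^sup>2 * m\<^sup>2 / (2 * (1 - \<theta>)\<^sup>2)))"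
proof -
  define w where "w = geom_weight \<theta> K"
  have levels: "finite (chain_level A T K j)" "chain_level A T K j \<noteq> {}"
    "chain_level A T K j \<subseteq> {a..b}" for j
    using assms unfolding chaining_net_def chain_level_def by auto
  have "(\<integral>\<^sup>+\<omega>. ennreal (exp (lam * (\<Sum>j\<le>K. MAX s\<in>chain_level A T K j.
        \<bar>chain_link (\<lambda>s. X s \<omega>) \<pi> j s\<bar>))) \<partial>M)
      \<le> ennreal (2 * exp (\<Sum>j\<le>K. w j * ln (card (chain_level A T K j)))
        * exp (lam\<^sup>2 / 2 * (\<Sum>j\<le>K. (\<theta>^j * m)\<^sup>2 / w j)))"
  proof (rule nn_integral_exp_sum_Max_abs_le[OF prob])
    show "w j > 0" for j
      using \<theta>_pos \<theta>_less_1 by (simp add: w_def geom_weight_pos)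
    show "(\<Sum>j\<le>K. w j) = 1"
      by (simp add: w_def sum_geom_weight)
    fix j s assume "s \<in> chain_level A T K j"
    with levels(3) assms(1) have "s \<in> {a..b}" "\<pi> j s \<in> {a..b}"
      unfolding chaining_net_def by blast+
    then show "centered_normal_rv M (\<lambda>\<omega>. chain_link (\<lambda>s. X s \<omega>) \<pi> j s)"
        "(\<integral>\<omega>. (chain_link (\<lambda>s. X s \<omega>) \<pi> j s)\<^sup>2 \<partial>M) \<le> (\<theta>^j * m)\<^sup>2"
      using centered_gaussian_process_point[OF gaussian] centered_gaussian_process_diff[OF gaussian]
        variance assms(1) unfolding chaining_net_def
      by (cases "j = 0"; simp add: chain_link_def)+
  qed (use levels in auto)
  also have "\<dots> \<le> ennreal (2 * exp (\<Sum>j\<le>K. w j * ln (card (chain_level A T K j)))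
        * exp (lam\<^sup>2 * m\<^sup>2 / (2 * (1 - \<theta>)\<^sup>2)))"
  proof (intro ennreal_leI mult_left_mono)
    have "(\<Sum>j\<le>K. (\<theta>^j * m)\<^sup>2 / w j) \<le> m\<^sup>2 / (1 - \<theta>)\<^sup>2"
      unfolding w_def by (rule sum_geometric_variance_div_geom_weight_le[OF \<theta>_pos \<theta>_less_1])
    then have "lam\<^sup>2 / 2 * (\<Sum>j\<le>K. (\<theta>^j * m)\<^sup>2 / w j) \<le> lam\<^sup>2 / 2 * (m\<^sup>2 / (1 - \<theta>)\<^sup>2)"
      by (rule mult_left_mono) simp
    then show "exp (lam\<^sup>2 / 2 * (\<Sum>j\<le>K. (\<theta>^j * m)\<^sup>2 / w j)) \<le> exp (lam\<^sup>2 * m\<^sup>2 / (2 * (1 - \<theta>)\<^sup>2))"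
      by simp
  qed simp
  finally show ?thesis
    by (simp add: w_def)
qed

lemma exp_sum_geom_weight_ln_card_chain_level_le:
  assumes "chaining_net A \<pi>"
  shows "ennreal (exp (\<Sum>j\<le>K. geom_weight \<theta> K j * ln (card (chain_level A T K j))))
    \<le> r_ginv r (I_tilde r \<sigma> a b (\<theta> * m) / ennreal (\<theta> * m)) * ennreal (exp (\<theta>^K * ln (card T)))"
proof -
  have "ennreal (exp (\<Sum>j<K. geom_weight \<theta> K j * ln (card (A (Suc j)))))
      \<le> r_ginv r (I_tilde r \<sigma> a b (\<theta> * m) / ennreal (\<theta> * m))"
  proof (rule exp_sum_geom_weight_ln_le_r_ginv)
    fix j
    have "finite (A (Suc j))" "A (Suc j) \<noteq> {}"
      "real (card (A (Suc j))) \<le> covering_bound \<sigma> a b (\<theta>^(Suc j) * m) + 1"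
      using assms unfolding chaining_net_def by blast+
    then show "1 \<le> real (card (A (Suc j))) \<and>
        real (card (A (Suc j))) \<le> covering_bound \<sigma> a b (\<theta>^(j+1) * m) + 1"
      by (simp add: Suc_le_eq card_gt_0_iff)
  qed (use ab \<sigma>_tendsto r_mono r_nonneg r_convex \<theta>_pos \<theta>_less_1 m_pos in auto)
  moreover have "(\<Sum>j\<le>K. geom_weight \<theta> K j * ln (card (chain_level A T K j)))
      = (\<Sum>j<K. geom_weight \<theta> K j * ln (card (A (Suc j)))) + \<theta>^K * ln (card T)"
    by (simp add: chain_level_def geom_weight_def lessThan_Suc_atMost[symmetric])
  ultimately show ?thesis
    by (simp add: exp_add ennreal_mult' mult_right_mono)
qed

lemma nn_integral_SUP_exp_abs_le_chaining:
  assumes "finite T" "T \<noteq> {}" "T \<subseteq> {a..b}" "lam \<ge> 0"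
  shows "(\<integral>\<^sup>+\<omega>. (SUP t\<in>T. ennreal (exp (lam * \<bar>X t \<omega>\<bar>))) \<partial>M)
    \<le> 2 * ennreal (exp (lam\<^sup>2 * m\<^sup>2 / (2 * (1 - \<theta>)\<^sup>2)))
        * r_ginv r (I_tilde r \<sigma> a b (\<theta> * m) / ennreal (\<theta> * m)) * ennreal (exp (\<theta>^K * ln (card T)))"
proof -
  obtain A \<pi> where net: "chaining_net A \<pi>"
    using chaining_net_exists by blast
  define W where "W \<omega> = (\<Sum>j\<le>K. MAX s\<in>chain_level A T K j. \<bar>chain_link (\<lambda>s. X s \<omega>) \<pi> j s\<bar>)" for \<omega>
  have "\<bar>X t \<omega>\<bar> \<le> W \<omega>" if "t \<in> T" for t \<omega>
    unfolding W_def using net assms(1,3) that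
    by (intro abs_le_sum_Max_chain_link[where I = "{a..b}"]) (auto simp: chaining_net_def)
  then have "(SUP t\<in>T. ennreal (exp (lam * \<bar>X t \<omega>\<bar>))) \<le> ennreal (exp (lam * W \<omega>))" for \<omega>
    using assms(4) by (intro SUP_least ennreal_leI) (simp add: mult_left_mono)
  then have "(\<integral>\<^sup>+\<omega>. (SUP t\<in>T. ennreal (exp (lam * \<bar>X t \<omega>\<bar>))) \<partial>M)
      \<le> (\<integral>\<^sup>+\<omega>. ennreal (exp (lam * W \<omega>)) \<partial>M)"
    by (rule nn_integral_mono)
  also have "\<dots> \<le> 2 * ennreal (exp (lam\<^sup>2 * m\<^sup>2 / (2 * (1 - \<theta>)\<^sup>2)))
      * ennreal (exp (\<Sum>j\<le>K. geom_weight \<theta> K j * ln (card (chain_level A T K j))))"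
    using nn_integral_exp_sum_Max_chain_link_le[OF net assms(1-3), of lam K]
    by (simp add: W_def ennreal_mult mult_ac)
  also have "\<dots> \<le> 2 * ennreal (exp (lam\<^sup>2 * m\<^sup>2 / (2 * (1 - \<theta>)\<^sup>2)))
      * (r_ginv r (I_tilde r \<sigma> a b (\<theta> * m) / ennreal (\<theta> * m)) * ennreal (exp (\<theta>^K * ln (card T))))"
    by (intro mult_left_mono exp_sum_geom_weight_ln_card_chain_level_le[OF net]) simp
  finally show ?thesis
    by (simp add: mult_ac)
qed

lemma nn_integral_SUP_exp_abs_finite_le:
  assumes "finite T" "T \<subseteq> {a..b}" "lam \<ge> 0"
  shows "(\<integral>\<^sup>+\<omega>. (SUP t\<in>T. ennreal (exp (lam * \<bar>X t \<omega>\<bar>))) \<partial>M)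
    \<le> 2 * ennreal (exp (lam\<^sup>2 * m\<^sup>2 / (2 * (1 - \<theta>)\<^sup>2)))
        * r_ginv r (I_tilde r \<sigma> a b (\<theta> * m) / ennreal (\<theta> * m))"
    (is "?L \<le> ?C")
proof (cases "T = {}")
  case True
  then show ?thesis by (simp add: bot_ennreal)
next
  case False
  have "(\<lambda>K. exp (\<theta>^K * ln (card T))) \<longlonglongrightarrow> exp (0 * ln (card T))"
    using \<theta>_pos \<theta>_less_1 by (intro tendsto_intros LIMSEQ_power_zero) auto
  then have "(\<lambda>K. ennreal (exp (\<theta>^K * ln (card T)))) \<longlonglongrightarrow> ennreal 1"
    by (intro tendsto_ennrealI) simp
  then have "(\<lambda>K. ?C * ennreal (exp (\<theta>^K * ln (card T)))) \<longlonglongrightarrow> ?C * 1"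
    by (intro tendsto_mult_ennreal[OF tendsto_const]) auto
  moreover have "\<forall>K. ?L \<le> ?C * ennreal (exp (\<theta>^K * ln (card T)))"
    using nn_integral_SUP_exp_abs_le_chaining[OF assms(1) False assms(2,3)] by blast
  ultimately have "?L \<le> ?C * 1"
    by (intro LIMSEQ_le_const) auto
  then show ?thesis by simp
qed

lemma nn_integral_SUP_exp_abs_countable_le:
  assumes "countable S" "S \<subseteq> {a..b}" "lam \<ge> 0"
  shows "(\<integral>\<^sup>+\<omega>. (SUP s\<in>S. ennreal (exp (lam * \<bar>X s \<omega>\<bar>))) \<partial>M)
    \<le> 2 * ennreal (exp (lam\<^sup>2 * m\<^sup>2 / (2 * (1 - \<theta>)\<^sup>2)))
        * r_ginv r (I_tilde r \<sigma> a b (\<theta> * m) / ennreal (\<theta> * m))"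
proof (rule nn_integral_SUP_countable_le[OF assms(1)])
  fix s assume "s \<in> S"
  then have [measurable]: "X s \<in> borel_measurable M"
    using centered_gaussian_process_point[OF gaussian] assms(2) by (auto simp: centered_normal_rv_def)
  show "(\<lambda>\<omega>. ennreal (exp (lam * \<bar>X s \<omega>\<bar>))) \<in> borel_measurable M"
    by measurable
qed (use assms(2,3) in \<open>auto intro: nn_integral_SUP_exp_abs_finite_le\<close>)

end

theorem corollary1:
  fixes M :: "'a measure" and X :: "real \<Rightarrow> 'a \<Rightarrow> real"
    and a b m \<theta> lam :: real and \<sigma> r :: "real \<Rightarrow> real"
  assumes "prob_space M" and "a < b"
    and "centered_gaussian_process M {a..b} X"
    and "separable_process M {a..b} X"
    and "bdd_above ((\<lambda>t. sqrt (\<integral>\<omega>. (X t \<omega>)\<^sup>2 \<partial>M)) ` {a..b})"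
    and "m = (SUP t\<in>{a..b}. sqrt (\<integral>\<omega>. (X t \<omega>)\<^sup>2 \<partial>M))"
    and "m > 0"
    and "\<forall>h>0. \<sigma> h > 0" and "strict_mono_on {0<..} \<sigma>"
    and "(\<sigma> \<longlongrightarrow> 0) (at_right 0)"
    and "\<forall>h>0. \<forall>s\<in>{a..b}. \<forall>t\<in>{a..b}. \<bar>t - s\<bar> < h \<longrightarrow>
            sqrt (\<integral>\<omega>. (X t \<omega> - X s \<omega>)\<^sup>2 \<partial>M) \<le> \<sigma> h"
    and "mono_on {1..} r" and "\<forall>x\<ge>1. r x \<ge> 0"
    and "convex_on {0..} (\<lambda>y. r (exp y))"
    and "0 < \<theta>" and "\<theta> < 1" and "lam > 0"
  shows "(\<integral>\<^sup>+ \<omega>. (SUP t\<in>{a..b}. ennreal (exp (lam * \<bar>X t \<omega>\<bar>))) \<partial>M)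
         \<le> 2 * ennreal (exp (lam\<^sup>2 * m\<^sup>2 / (2 * (1 - \<theta>)\<^sup>2)))
             * r_ginv r (I_tilde r \<sigma> a b (\<theta> * m) / ennreal (\<theta> * m))"
proof -
  have variance: "(\<integral>\<omega>. (X t \<omega>)\<^sup>2 \<partial>M) \<le> m\<^sup>2" if "t \<in> {a..b}" for t
  proof -
    have "sqrt (\<integral>\<omega>. (X t \<omega>)\<^sup>2 \<partial>M) \<le> m"
      unfolding assms(6) using that assms(5) by (intro cSUP_upper)
    then show ?thesis
      using real_sqrt_le_iff by fastforce
  qed
  interpret gaussian_chaining M X a b m \<theta> \<sigma> r
  proof (rule gaussian_chaining.intro)
    fix h s t assume "h > 0" "s \<in> {a..b}" "t \<in> {a..b}" "\<bar>t - s\<bar> < h"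
    then show "sqrt (\<integral>\<omega>. (X t \<omega> - X s \<omega>)\<^sup>2 \<partial>M) \<le> \<sigma> h"
      using assms(11) by blast
  qed (fact assms variance)+
  have "continuous_on UNIV (\<lambda>x. ennreal (exp (lam * \<bar>x\<bar>)))"
    by (intro continuous_on_ennreal continuous_intros)
  then show ?thesis
  proof (rule separable_process_nn_integral_SUP_le[OF assms(4)])
    fix S assume "countable S" "S \<subseteq> {a..b}" and separant:
      "(\<integral>\<^sup>+\<omega>. (SUP t\<in>{a..b}. ennreal (exp (lam * \<bar>X t \<omega>\<bar>))) \<partial>M)
        \<le> (\<integral>\<^sup>+\<omega>. (SUP s\<in>S. ennreal (exp (lam * \<bar>X s \<omega>\<bar>))) \<partial>M)"
    show ?thesis
      using assms(17)
      by (intro order_trans[OF separant nn_integral_SUP_exp_abs_countable_le]) (simp_all add: \<open>countable S\<close> \<open>S \<subseteq> {a..b}\<close>)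
  qed
qed

end
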